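(* Let $G$ be a commutative group, $g\in\mathrm{Aut}(G)$, and $t_1,t_2$ fixed points of $g$. Define $f_i(x)=g(x)t_i$ for $i=1,2$. If there is $z\in G$ with $g(z)=z^{-1}t_1^{-1}t_2$, then $G(f_1)$ and $G(f_2)$ are isotopic.
   Context: Construction $G(f)$: for a commutative group $G$ (written multiplicatively) and a bijection $f:G\to G$, let $\overline{G}=\{\overline{x}:x\in G\}$ be a disjoint copy of $G$, and let $G(f)$ be $G\cup\overline{G}$ with multiplication $x*y=xy$, $x*\overline{y}=\overline{xy}$, $\overline{x}*y=\overline{xy}$, $\overline{x}*\overline{y}=f(xy)$ for $x,y\in G$. Loops $(Q_1,* )$ and $(Q_2,\circ)$ are isotopic if there are bijections $\alpha,\beta,\gamma:Q_1\to Q_2$ with $\alpha(u)\circ\beta(v)=\gamma(u*v)$ for all $u,v\in Q_1$. *)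

theory Defs
  imports "HOL-Algebra.Algebra"
begin

text \<open>The construction G(f): carrier is a disjoint union of two copies of the group carrier;
  Inl x stands for x, Inr x stands for the barred copy of x.\<close>

definition Gf_carrier :: "('a, 'b) monoid_scheme \<Rightarrow> ('a + 'a) set" where
  "Gf_carrier G = carrier G <+> carrier G"

fun Gf_mult :: "('a, 'b) monoid_scheme \<Rightarrow> ('a \<Rightarrow> 'a) \<Rightarrow> 'a + 'a \<Rightarrow> 'a + 'a \<Rightarrow> 'a + 'a" where
  "Gf_mult G f (Inl x) (Inl y) = Inl (x \<otimes>\<^bsub>G\<^esub> y)"
| "Gf_mult G f (Inl x) (Inr y) = Inr (x \<otimes>\<^bsub>G\<^esub> y)"
| "Gf_mult G f (Inr x) (Inl y) = Inr (x \<otimes>\<^bsub>G\<^esub> y)"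
| "Gf_mult G f (Inr x) (Inr y) = Inl (f (x \<otimes>\<^bsub>G\<^esub> y))"

definition isotopic :: "'a set \<Rightarrow> ('a \<Rightarrow> 'a \<Rightarrow> 'a) \<Rightarrow> 'c set \<Rightarrow> ('c \<Rightarrow> 'c \<Rightarrow> 'c) \<Rightarrow> bool" where
  "isotopic Q1 m1 Q2 m2 \<longleftrightarrow>
     (\<exists>\<alpha> \<beta> \<gamma>. bij_betw \<alpha> Q1 Q2 \<and> bij_betw \<beta> Q1 Q2 \<and> bij_betw \<gamma> Q1 Q2 \<and>
        (\<forall>u\<in>Q1. \<forall>v\<in>Q1. m2 (\<alpha> u) (\<beta> v) = \<gamma> (m1 u v)))"

end

theory Submission
  imports Defs
begin

(* Translating
   only the barred copy in the left factor by z^-1 and only the unbarred copy in the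
   right (and in the result) by z gives the isotopy
     alpha = id + (z^-1 * _),     beta = gamma = (z * _) + id
   from G(f1) to G(f2).  The three products involving an unbarred element are respected
   because G is commutative; the product of two barred elements is respected exactly
   when f2 (z^-1 w) = z f1 w for all w, which is the criterion of lemma
   Gf_isotopic_by_translation.  For f_i x = g x t_i this condition follows from
   g(z^-1) = (g z)^-1 = z t1 t2^-1, i.e. from the hypothesis on z.  The argument only
   uses that g is an endomorphism. *)

lemma bij_betw_map_sum:
  assumes f: "bij_betw f A A'" and h: "bij_betw h B B'"
  shows "bij_betw (map_sum f h) (A <+> B) (A' <+> B')"
proof (rule bij_betwI)
  show "map_sum f h \<in> A <+> B \<rightarrow> A' <+> B'"
    using f h by (auto intro: bij_betw_apply)
  show "map_sum (inv_into A f) (inv_into B h) \<in> A' <+> B' \<rightarrow> A <+> B"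
    using bij_betw_inv_into[OF f] bij_betw_inv_into[OF h] by (auto intro: bij_betw_apply)
  show "map_sum (inv_into A f) (inv_into B h) (map_sum f h x) = x" if "x \<in> A <+> B" for x
    using that f h by (auto simp: bij_betw_def)
  show "map_sum f h (map_sum (inv_into A f) (inv_into B h) y) = y" if "y \<in> A' <+> B'" for y
    using that f h by (auto simp: bij_betw_def f_inv_into_f)
qed

lemma (in group) bij_betw_left_translation:
  assumes "c \<in> carrier G"
  shows "bij_betw (\<lambda>x. c \<otimes> x) (carrier G) (carrier G)"
  using inj_on_cmult[OF assms] surj_const_mult[OF assms] by (simp add: bij_betw_def)

lemma (in comm_group) Gf_isotopic_by_translation:
  assumes z: "z \<in> carrier G"
    and shift: "\<And>w. w \<in> carrier G \<Longrightarrow> f2 (inv z \<otimes> w) = z \<otimes> f1 w"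
  shows "isotopic (Gf_carrier G) (Gf_mult G f1) (Gf_carrier G) (Gf_mult G f2)"
proof -
  define \<alpha> :: "'a + 'a \<Rightarrow> 'a + 'a" where "\<alpha> = map_sum (\<lambda>x. x) (\<lambda>x. inv z \<otimes> x)"
  define \<beta> :: "'a + 'a \<Rightarrow> 'a + 'a" where "\<beta> = map_sum (\<lambda>x. z \<otimes> x) (\<lambda>x. x)"
  have id_bij: "bij_betw (\<lambda>x. x) (carrier G) (carrier G)"
    by (simp add: bij_betw_def)
  have \<alpha>_bij: "bij_betw \<alpha> (Gf_carrier G) (Gf_carrier G)"
    unfolding \<alpha>_def Gf_carrier_def
    using bij_betw_map_sum[OF id_bij bij_betw_left_translation] z by simp
  have \<beta>_bij: "bij_betw \<beta> (Gf_carrier G) (Gf_carrier G)"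
    unfolding \<beta>_def Gf_carrier_def
    using bij_betw_map_sum[OF bij_betw_left_translation id_bij] z by simp
  have "Gf_mult G f2 (\<alpha> u) (\<beta> v) = \<beta> (Gf_mult G f1 u v)"
    if u: "u \<in> Gf_carrier G" and v: "v \<in> Gf_carrier G" for u v
  proof -
    obtain x y where x: "x \<in> carrier G" and y: "y \<in> carrier G"
      and "u = Inl x \<or> u = Inr x" and "v = Inl y \<or> v = Inr y"
      using u v unfolding Gf_carrier_def by blast
    moreover have "inv z \<otimes> x \<otimes> (z \<otimes> y) = x \<otimes> y"
      using x y z by (metis inv_closed m_assoc m_closed m_lcomm r_inv r_one)
    moreover have "f2 (inv z \<otimes> x \<otimes> y) = z \<otimes> f1 (x \<otimes> y)"
      using x y z shift[of "x \<otimes> y"] by (simp add: m_assoc)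
    ultimately show ?thesis
      unfolding \<alpha>_def \<beta>_def using z by (auto simp: m_lcomm)
  qed
  then show ?thesis
    unfolding isotopic_def using \<alpha>_bij \<beta>_bij by blast
qed

lemma (in comm_group) endomorphism_shift:
  assumes g: "g \<in> hom G G"
    and t: "t1 \<in> carrier G" "t2 \<in> carrier G"
    and z: "z \<in> carrier G" and gz: "g z = inv z \<otimes> inv t1 \<otimes> t2"
    and w: "w \<in> carrier G"
  shows "g (inv z \<otimes> w) \<otimes> t2 = z \<otimes> (g w \<otimes> t1)"
proof -
  interpret g: group_hom G G g
    using g by (simp add: group_hom_def group_hom_axioms_def is_group)
  have g_inv_z: "g (inv z) = z \<otimes> t1 \<otimes> inv t2"
    using z t by (simp add: gz inv_mult m_ac)
  have "g (inv z \<otimes> w) \<otimes> t2 = z \<otimes> t1 \<otimes> inv t2 \<otimes> g w \<otimes> t2"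
    using w z by (simp add: g_inv_z)
  also have "\<dots> = z \<otimes> (g w \<otimes> t1) \<otimes> (inv t2 \<otimes> t2)"
    using w z t by (simp only: m_ac m_closed inv_closed g.hom_closed)
  also have "\<dots> = z \<otimes> (g w \<otimes> t1)"
    using w z t by simp
  finally show ?thesis .
qed

theorem lemma6p1:
  fixes G :: "('a, 'b) monoid_scheme" and g :: "'a \<Rightarrow> 'a" and t1 t2 :: 'a
  assumes "comm_group G"
    and "g \<in> iso G G"
    and "t1 \<in> carrier G" and "t2 \<in> carrier G"
    and "g t1 = t1" and "g t2 = t2"
    and "\<exists>z\<in>carrier G. g z = inv\<^bsub>G\<^esub> z \<otimes>\<^bsub>G\<^esub> inv\<^bsub>G\<^esub> t1 \<otimes>\<^bsub>G\<^esub> t2"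
  shows "isotopic (Gf_carrier G) (Gf_mult G (\<lambda>x. g x \<otimes>\<^bsub>G\<^esub> t1))
                  (Gf_carrier G) (Gf_mult G (\<lambda>x. g x \<otimes>\<^bsub>G\<^esub> t2))"
proof -
  obtain z where z: "z \<in> carrier G"
    and gz: "g z = inv\<^bsub>G\<^esub> z \<otimes>\<^bsub>G\<^esub> inv\<^bsub>G\<^esub> t1 \<otimes>\<^bsub>G\<^esub> t2"
    using assms(7) by blast
  have g_hom: "g \<in> hom G G"
    using assms(2) by (simp add: iso_def)
  show ?thesis
    by (rule comm_group.Gf_isotopic_by_translation[OF assms(1) z],
        rule comm_group.endomorphism_shift[OF assms(1) g_hom assms(3,4) z gz])
qed

end
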